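(* Let $\mathcal C\subset\mathbb R^n$ be compact with non-empty interior, boundary of Lebesgue measure zero, and $\mathcal C=-\mathcal C$. Put $\mathcal C^+=\mathcal C\cap\{y_n>0\}$, $\mathcal W=\mathrm{pr}(\mathcal C^+)$, $\widetilde{\mathcal C}^+=\{(\delta v',v'',v_n):(v',v'',v_n)\in\mathcal C^+,\ 0\le\delta\le1\}$ and $\widetilde{\mathcal A}_t=\widetilde{\mathcal C}^+\,\mathrm{diag}(e^{-nt}1_k,1_m,1)$ for $t\in\mathbb R$. Then for every $x\in\mathcal X$ for which $\xi_1(x,1)$ exists (i.e. the hitting-time multiset for $\mathcal W$ at $L=1$ is nonempty), $$\lim_{t\to\infty}r_1(x,\mathcal H(\widetilde{\mathcal A}_t))=|\xi_1(x,1)|.$$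
   Context: Fix integers $k\ge1$, $m\ge0$, $n=k+m+1$; $G=\mathrm{SL}(n,\mathbb R)$, $\Gamma=\mathrm{SL}(n,\mathbb Z)$, $\mathcal X=\Gamma\backslash G$. Row vectors $y=(y',y'',y_n)\in\mathbb R^k\times\mathbb R^m\times\mathbb R$, $G$ acting from the right; $\widehat{\mathbb Z}^n$ is the set of primitive integer vectors. $U(s)=\begin{pmatrix}1_k&0&0\\0&1_m&0\\-s&0&1\end{pmatrix}$ for $s\in\mathbb R^k$ (middle block absent if $m=0$), $h_s(x)=xU(s)$. Fix a norm $|\cdot|$ on $\mathbb R^k$. $\mathrm{pr}:\mathbb R^n\to\mathbb R^{m+1}$, $(y_1,\dots,y_n)\mapsto(y_{k+1},\dots,y_n)$. For Borel $\mathcal C\subset\mathbb R^n$, $\mathcal H(\mathcal C)=\{\Gamma g:\widehat{\mathbb Z}^ng\cap\mathcal C\ne\emptyset\}$; for $E\subset\mathcal X$, $r_1(x,E)=\inf\{|s|:h_s(x)\in E\}$. For $\mathcal W\subset\mathbb R^m\times\mathbb R_{>0}$, $x=\Gamma g$ and $L>0$, the hitting times $\xi_1(x,L),\xi_2(x,L),\dots$ list with multiplicity the multiset $\{v'/v_n: v\in\widehat{\mathbb Z}^ng,\ (v'',v_n)\in L^{-1}\mathcal W\}$ in order of nondecreasing $|\cdot|$ (the times at which $h_s(x)$ meets the section $\Gamma\backslash\Gamma H\{R(w):w\in L^{-1}\mathcal W\}$). *)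

theory Defs
  imports "HOL-Analysis.Analysis"
begin

text \<open>R^n is represented as real^('k + 'p): the coordinates indexed by
  Inl i (i :: 'k) form y' (so k = CARD('k) \<ge> 1), the coordinates indexed by Inr j
  (j :: 'p, a finite linear order with CARD('p) = m + 1) form (y'', y_n), where y_n is the
  coordinate at the greatest index of 'p and y'' are the remaining m coordinates.
  Vectors are row vectors; the matrix group acts from the right via v v* g.\<close>

definition lastp :: "'p::{finite,linorder}" where
  "lastp = Max UNIV"

definition vn :: "real^('k::finite + 'p::{finite,linorder}) \<Rightarrow> real" where
  "vn v = v $ Inr lastp"

definition vk :: "real^('k::finite + 'p::{finite,linorder}) \<Rightarrow> real^'k" where
  "vk v = (\<chi> i. v $ Inl i)"

definition pr :: "real^('k::finite + 'p::{finite,linorder}) \<Rightarrow> real^'p::{finite,linorder}" where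
  "pr v = (\<chi> j. v $ Inr j)"

definition is_norm :: "(real^'k::finite \<Rightarrow> real) \<Rightarrow> bool" where
  "is_norm N \<longleftrightarrow> (\<forall>x. N x = 0 \<longleftrightarrow> x = 0) \<and> (\<forall>c x. N (c *\<^sub>R x) = \<bar>c\<bar> * N x)
      \<and> (\<forall>x y. N (x + y) \<le> N x + N y)"

definition SLn :: "(real^'n::finite^'n) set" where
  "SLn = {g. det g = 1}"

definition Gamma :: "(real^'n::finite^'n) set" where
  "Gamma = {g. det g = 1 \<and> (\<forall>i j. g $ i $ j \<in> \<int>)}"

definition coset :: "real^'n::finite^'n \<Rightarrow> (real^'n^'n) set" where
  "coset g = {\<gamma> ** g | \<gamma>. \<gamma> \<in> Gamma}"

definition Xspace :: "(real^'n::finite^'n) set set" where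
  "Xspace = coset ` SLn"

definition primitive :: "real^'n::finite \<Rightarrow> bool" where
  "primitive a \<longleftrightarrow> (\<forall>i. a $ i \<in> \<int>) \<and> a \<noteq> 0 \<and>
     (\<forall>d::int. (\<forall>i. \<exists>z::int. a $ i = of_int d * of_int z) \<longrightarrow> \<bar>d\<bar> = 1)"

text \<open>The set of primitive lattice vectors of x = \<Gamma>g, i.e. \<widehat>Z^n g (independent of
  the representative g).\<close>
definition prim_pts :: "(real^'n::finite^'n) set \<Rightarrow> (real^'n) set" where
  "prim_pts x = {a v* g | a g. g \<in> x \<and> primitive a}"

definition hH :: "(real^'n::finite) set \<Rightarrow> (real^'n^'n) set set" where
  "hH C = {x \<in> Xspace. prim_pts x \<inter> C \<noteq> {}}"

definition Umat :: "real^'k::finite \<Rightarrow> real^('k + 'p::{finite,linorder})^('k + 'p)" where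
  "Umat s = (\<chi> i j. if i = j then 1
      else if i = Inr lastp then (case j of Inl l \<Rightarrow> - (s $ l) | Inr _ \<Rightarrow> 0) else 0)"

definition hs :: "real^'k::finite \<Rightarrow> (real^('k + 'p::{finite,linorder})^('k + 'p)) set
     \<Rightarrow> (real^('k + 'p)^('k + 'p)) set" where
  "hs s x = (\<lambda>g. g ** Umat s) ` x"

definition r1 :: "(real^'k::finite \<Rightarrow> real) \<Rightarrow> (real^('k + 'p::{finite,linorder})^('k + 'p)) set
     \<Rightarrow> (real^('k + 'p)^('k + 'p)) set set \<Rightarrow> real" where
  "r1 N x E = Inf {N s | s. hs s x \<in> E}"

definition hit_times :: "(real^'p::{finite,linorder}) set \<Rightarrow> (real^('k::finite + 'p)^('k + 'p)) set
     \<Rightarrow> real \<Rightarrow> (real^'k) set" where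
  "hit_times W x L = {(1 / vn v) *\<^sub>R vk v | v. v \<in> prim_pts x \<and> pr v \<in> (\<lambda>w. (1 / L) *\<^sub>R w) ` W}"

definition xi1_abs :: "(real^'k::finite \<Rightarrow> real) \<Rightarrow> (real^'p::{finite,linorder}) set
     \<Rightarrow> (real^('k + 'p)^('k + 'p)) set \<Rightarrow> real \<Rightarrow> real" where
  "xi1_abs N W x L = Inf (N ` hit_times W x L)"

definition Cplus :: "(real^('k::finite + 'p::{finite,linorder})) set \<Rightarrow> (real^('k + 'p)) set" where
  "Cplus C = C \<inter> {y. vn y > 0}"

definition scale_k :: "real \<Rightarrow> real^('k::finite + 'p::finite) \<Rightarrow> real^('k + 'p)" where
  "scale_k \<delta> v = (\<chi> i. case i of Inl _ \<Rightarrow> \<delta> * v $ i | Inr _ \<Rightarrow> v $ i)"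

definition Ctilde :: "(real^('k::finite + 'p::{finite,linorder})) set \<Rightarrow> (real^('k + 'p)) set" where
  "Ctilde C = {scale_k \<delta> v | \<delta> v. v \<in> Cplus C \<and> 0 \<le> \<delta> \<and> \<delta> \<le> 1}"

definition diag_t :: "real \<Rightarrow> real^('k::finite + 'p::finite)^('k + 'p)" where
  "diag_t t = (\<chi> i j. if i = j then (case i of Inl _ \<Rightarrow> exp (- real CARD('k + 'p) * t) | Inr _ \<Rightarrow> 1) else 0)"

definition Atilde :: "(real^('k::finite + 'p::{finite,linorder})) set \<Rightarrow> real \<Rightarrow> (real^('k + 'p)) set" where
  "Atilde C t = (\<lambda>y. y v* diag_t t) ` Ctilde C"

end

theory Submission
  imports Defs
begin

text \<open>If \<open>\<xi> = v'/v\<^sub>n\<close> is a hitting time, the shear \<open>U(\<xi>)\<close> moves \<open>v\<close> to \<open>(0, v'', v\<^sub>n)\<close>,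
  which lies in the thickened set \<open>A\<^sub>t\<close> for every \<open>t\<close>; hence \<open>r\<^sub>1\<close> never exceeds \<open>|\<xi>\<^sub>1(x,1)|\<close>.
  Conversely, if \<open>h\<^sub>s(x)\<close> meets \<open>H(A\<^sub>t)\<close> through a primitive vector \<open>v\<close>, then
  \<open>v' - v\<^sub>n s = exp(-n t) \<delta> w'\<close> for some \<open>w \<in> C\<^sup>+\<close> and \<open>0 \<le> \<delta> \<le> 1\<close>. For bounded \<open>s\<close> all such \<open>v\<close>
  lie in a fixed ball, so by discreteness of the lattice their last coordinates are bounded below
  by some \<open>\<mu> > 0\<close>; then \<open>v'/v\<^sub>n\<close> is a hitting time within \<open>O(exp(-t)/\<mu>)\<close> of \<open>s\<close>.\<close>

lemma is_norm_eq_0: "is_norm N \<Longrightarrow> N x = 0 \<longleftrightarrow> x = 0"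
  unfolding is_norm_def by blast

lemma is_norm_zero: "is_norm N \<Longrightarrow> N 0 = 0"
  using is_norm_eq_0 by blast

lemma is_norm_scaleR: "is_norm N \<Longrightarrow> N (c *\<^sub>R x) = \<bar>c\<bar> * N x"
  unfolding is_norm_def by blast

lemma is_norm_triangle: "is_norm N \<Longrightarrow> N (x + y) \<le> N x + N y"
  unfolding is_norm_def by blast

lemma is_norm_diff_le: "is_norm N \<Longrightarrow> N x - N y \<le> N (x - y)"
  using is_norm_triangle[of N "x - y" y] by simp

lemma is_norm_nonneg:
  assumes "is_norm N" shows "0 \<le> N x"
proof -
  have "N (- x) = N x"
    using is_norm_scaleR[OF assms, of "-1" x] by simp
  then show ?thesis
    using is_norm_diff_le[OF assms, of 0 x] is_norm_zero[OF assms] by simp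
qed

lemma is_norm_sum_le: "is_norm N \<Longrightarrow> N (sum f A) \<le> (\<Sum>i\<in>A. N (f i))"
proof (induction A rule: infinite_finite_induct)
  case (insert a A)
  then show ?case
    using is_norm_triangle[OF insert.prems, of "f a" "sum f A"] by simp
qed (simp_all add: is_norm_zero)

lemma is_norm_le_norm:
  fixes N :: "real^'k::finite \<Rightarrow> real"
  assumes "is_norm N"
  obtains K where "K \<ge> 0" "\<And>y. N y \<le> K * norm y"
proof
  let ?K = "\<Sum>i\<in>UNIV. N (axis i 1)"
  show "?K \<ge> 0"
    by (intro sum_nonneg is_norm_nonneg[OF assms])
  fix y :: "real^'k"
  have "N y = N (\<Sum>i\<in>UNIV. y$i *\<^sub>R axis i 1)"
    using basis_expansion[of y] by (simp add: scalar_mult_eq_scaleR)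
  also have "\<dots> \<le> (\<Sum>i\<in>UNIV. \<bar>y$i\<bar> * N (axis i 1))"
    using is_norm_sum_le[OF assms, of "\<lambda>i. y$i *\<^sub>R axis i 1" UNIV] by (simp add: is_norm_scaleR[OF assms])
  also have "\<dots> \<le> (\<Sum>i\<in>UNIV. norm y * N (axis i 1))"
    by (intro sum_mono mult_right_mono component_le_norm_cart is_norm_nonneg[OF assms])
  finally show "N y \<le> ?K * norm y"
    by (simp add: sum_distrib_left mult.commute)
qed

text \<open>\<open>N\<close> is Lipschitz, hence attains a positive minimum on the unit sphere.\<close>

lemma is_norm_ge_norm:
  fixes N :: "real^'k::finite \<Rightarrow> real"
  assumes "is_norm N"
  obtains c where "c > 0" "\<And>y. c * norm y \<le> N y"
proof -
  obtain K where K: "K \<ge> 0" "\<And>y. N y \<le> K * norm y"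
    using is_norm_le_norm[OF assms] by blast
  have "lipschitz_on K UNIV N"
  proof (rule lipschitz_onI)
    fix x y :: "real^'k"
    show "dist (N x) (N y) \<le> K * dist x y"
      using is_norm_diff_le[OF assms, of x y] is_norm_diff_le[OF assms, of y x]
        K(2)[of "x - y"] K(2)[of "y - x"]
      by (simp add: dist_real_def dist_norm norm_minus_commute abs_le_iff)
  qed (fact K(1))
  then have cont: "continuous_on (sphere 0 1) N"
    using lipschitz_on_continuous_on lipschitz_on_subset by blast
  obtain z where z: "z \<in> sphere 0 1" "\<And>y. y \<in> sphere 0 1 \<Longrightarrow> N z \<le> N y"
    using continuous_attains_inf[OF compact_sphere _ cont] by force
  have "z \<noteq> 0"
    using z(1) by auto
  then have "N z > 0"
    using is_norm_nonneg[OF assms, of z] is_norm_eq_0[OF assms, of z] by simp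
  moreover have "N z * norm y \<le> N y" for y
  proof (cases "y = 0")
    case False
    then have "N z \<le> N ((1 / norm y) *\<^sub>R y)"
      by (intro z(2)) simp
    then show ?thesis
      using False by (simp add: is_norm_scaleR[OF assms] field_simps)
  qed (simp add: is_norm_zero[OF assms])
  ultimately show ?thesis
    using that by blast
qed

lemma vec_eq_iff_vk_pr: "v = w \<longleftrightarrow> vk v = vk w \<and> pr v = pr w"
  by (auto simp: vec_eq_iff vk_def pr_def split: sum.splits) (metis sum.exhaust)

lemma vn_eq_pr: "vn v = pr v $ lastp"
  by (simp add: vn_def pr_def)

lemma Umat_Inl: "Umat s $ i $ Inl l = (if i = Inl l then 1 else 0) + (if i = Inr lastp then - s $ l else 0)"
  by (auto simp: Umat_def)

lemma Umat_Inr: "Umat s $ i $ Inr j = (if i = Inr j then 1 else 0)"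
  by (auto simp: Umat_def)

lemma diag_t_Inl: "diag_t t $ i $ Inl l = (if i = Inl l then exp (- real CARD('k + 'p) * t) else 0)"
  for i :: "'k::finite + 'p::finite"
  by (auto simp: diag_t_def)

lemma diag_t_Inr: "diag_t t $ i $ Inr j = (if i = Inr j then 1 else 0)"
  for i :: "'k::finite + 'p::finite"
  by (auto simp: diag_t_def)

lemma vk_Umat: "vk (v v* Umat s) = vk v - vn v *\<^sub>R s"
  by (simp add: vec_eq_iff vk_def vn_def vector_matrix_mult_def Umat_Inl distrib_left
      sum.distrib mult_delta_right mult.commute)

lemma pr_Umat: "pr (v v* Umat s) = pr v"
  by (simp add: vec_eq_iff pr_def vector_matrix_mult_def Umat_Inr mult_delta_right)

lemma vk_diag_t: "vk (y v* diag_t t) = exp (- real CARD('k + 'p) * t) *\<^sub>R vk y"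
  for y :: "real^('k::finite + 'p::{finite,linorder})"
  by (simp add: vec_eq_iff vk_def vector_matrix_mult_def diag_t_Inl mult_delta_right mult.commute)

lemma pr_diag_t: "pr (y v* diag_t t) = pr y"
  by (simp add: vec_eq_iff pr_def vector_matrix_mult_def diag_t_Inr mult_delta_right)

lemma vk_scale_k: "vk (scale_k \<delta> v) = \<delta> *\<^sub>R vk v"
  by (simp add: vec_eq_iff vk_def scale_k_def)

lemma pr_scale_k: "pr (scale_k \<delta> v) = pr v"
  by (simp add: vec_eq_iff pr_def scale_k_def)

lemma norm_vk_pr: "norm v ^ 2 = norm (vk v) ^ 2 + norm (pr v) ^ 2"
proof -
  have "norm v ^ 2 = (\<Sum>i\<in>UNIV <+> UNIV. v $ i * v $ i)"
    by (simp only: UNIV_Plus_UNIV) (simp add: power2_norm_eq_inner inner_vec_def)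
  also have "\<dots> = norm (vk v) ^ 2 + norm (pr v) ^ 2"
    by (simp only: sum.Plus finite) (simp add: power2_norm_eq_inner inner_vec_def vk_def pr_def)
  finally show ?thesis .
qed

lemma det_Umat: "det (Umat s :: real^('k::finite + 'p::{finite,linorder})^('k + 'p)) = 1"
proof -
  let ?I = "mat 1 :: real^('k + 'p)^('k + 'p)"
  define r where "r = (\<Sum>l\<in>UNIV. (- s $ l) *s row (Inl l) ?I)"
  have "r \<in> vec.span {row j ?I | j. j \<noteq> Inr lastp}"
    unfolding r_def by (intro vec.span_sum vec.span_scale vec.span_base) auto
  then have "det (\<chi> j. if j = Inr lastp then row (Inr lastp) ?I + r else row j ?I) = 1"
    by (simp add: det_row_span)
  moreover have "r $ j = (case j of Inl l \<Rightarrow> - s $ l | Inr _ \<Rightarrow> 0)" for j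
    by (simp add: r_def sum_component row_def mat_def mult_delta_right sum_negf split: sum.split)
  then have "(\<chi> j. if j = Inr lastp then row (Inr lastp) ?I + r else row j ?I) = Umat s"
    by (simp add: vec_eq_iff Umat_def row_def mat_def split: sum.split)
  ultimately show ?thesis
    by simp
qed

lemma prim_pts_hs: "prim_pts (hs s x) = (\<lambda>v. v v* Umat s) ` prim_pts x"
  unfolding prim_pts_def hs_def by (force simp: vector_matrix_mul_assoc)

lemma hs_in_Xspace:
  assumes "x \<in> Xspace" shows "hs s x \<in> Xspace"
proof -
  obtain g where "det g = 1" "x = coset g"
    using assms unfolding Xspace_def SLn_def by auto
  then have "det (g ** Umat s) = 1" "hs s x = coset (g ** Umat s)"
    by (auto simp: det_mul det_Umat hs_def coset_def matrix_mul_assoc)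
  then show ?thesis
    unfolding Xspace_def SLn_def by blast
qed

lemma finite_vector:
  fixes B :: "'n::finite \<Rightarrow> 'a set"
  assumes "\<And>i. finite (B i)"
  shows "finite {V. \<forall>i::'n. V $ i \<in> B i}"
proof (rule finite_imageD)
  show "finite (vec_nth ` {V. \<forall>i::'n. V $ i \<in> B i})"
    by (rule finite_subset[OF _ finite_PiE[of UNIV B]]) (auto simp: assms)
qed (simp add: inj_on_def vec_nth_inject)

lemma finite_Ints_vectors_bounded:
  fixes S :: "(real^'n::finite) set"
  assumes "bounded S" shows "finite {b \<in> S. \<forall>i. b $ i \<in> \<int>}"
proof -
  obtain r where "\<And>b. b \<in> S \<Longrightarrow> norm b \<le> r"
    using assms unfolding bounded_iff by blast
  then have "{b \<in> S. \<forall>i. b $ i \<in> \<int>} \<subseteq> {b. \<forall>i. b $ i \<in> {k \<in> \<int>. \<bar>k\<bar> \<le> r}}"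
    using component_le_norm_cart order_trans by blast
  then show ?thesis
    using finite_vector[of "\<lambda>_. {k \<in> \<int>. \<bar>k\<bar> \<le> r}"] finite_abs_int_segment finite_subset by blast
qed

lemma finite_prim_pts_bounded:
  fixes x :: "(real^'n::finite^'n) set"
  assumes "x \<in> Xspace" "bounded S" shows "finite (prim_pts x \<inter> S)"
proof -
  obtain g where g: "det g = 1" "x = coset g"
    using assms(1) unfolding Xspace_def SLn_def by auto
  obtain G where gG: "g ** G = mat 1"
    using g(1) invertible_det_nz unfolding invertible_def by force
  have "bounded ((\<lambda>v. v v* G) ` S)"
    using assms(2) matrix_vector_mul_linear[of "transpose G"]
    by (intro bounded_linear_image) (simp_all add: linear_conv_bounded_linear)
  then have fin: "finite {b \<in> (\<lambda>v. v v* G) ` S. \<forall>i. b $ i \<in> \<int>}"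
    by (rule finite_Ints_vectors_bounded)
  have "prim_pts x \<inter> S \<subseteq> (\<lambda>b. b v* g) ` {b \<in> (\<lambda>v. v v* G) ` S. \<forall>i. b $ i \<in> \<int>}"
  proof
    fix v assume v: "v \<in> prim_pts x \<inter> S"
    then obtain a \<gamma> where a: "v = a v* (\<gamma> ** g)" "\<gamma> \<in> Gamma" "primitive a"
      unfolding prim_pts_def g(2) coset_def by auto
    define b where "b = a v* \<gamma>"
    have vb: "v = b v* g"
      by (simp add: a(1) b_def vector_matrix_mul_assoc)
    moreover have "b = v v* G"
      by (simp add: vb vector_matrix_mul_assoc gG)
    moreover have "b $ i \<in> \<int>" for i
      using a(2,3) unfolding b_def vector_matrix_mult_def Gamma_def primitive_def
      by (auto intro!: Ints_sum Ints_mult)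
    ultimately show "v \<in> (\<lambda>b. b v* g) ` {b \<in> (\<lambda>v. v v* G) ` S. \<forall>i. b $ i \<in> \<int>}"
      using v by blast
  qed
  then show ?thesis
    using fin finite_subset by blast
qed

lemma norm_vk_le: "norm (vk v) \<le> norm v"
  by (rule power2_le_imp_le) (simp_all add: norm_vk_pr[of v])

lemma norm_pr_le: "norm (pr v) \<le> norm v"
  by (rule power2_le_imp_le) (simp_all add: norm_vk_pr[of v])

lemma norm_le_vk_pr: "norm v \<le> norm (vk v) + norm (pr v)"
  by (rule power2_le_imp_le) (simp_all add: norm_vk_pr[of v] power2_sum)

lemma vn_le_norm: "\<bar>vn v\<bar> \<le> norm (pr v)"
  unfolding vn_eq_pr by (rule component_le_norm_cart)

lemma vn_pos_if_pr_eq_Cplus: "w \<in> Cplus C \<Longrightarrow> pr v = pr w \<Longrightarrow> 0 < vn v"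
  by (simp add: Cplus_def vn_eq_pr)

lemma hs_in_hH_Atilde_iff:
  fixes C :: "(real^('k::finite + 'p::{finite,linorder})) set"
  assumes "x \<in> Xspace"
  shows "hs s x \<in> hH (Atilde C t) \<longleftrightarrow>
    (\<exists>v\<in>prim_pts x. \<exists>w\<in>Cplus C. \<exists>\<delta>\<in>{0..1}. pr v = pr w \<and>
       vk v - vn v *\<^sub>R s = (exp (- real CARD('k + 'p) * t) * \<delta>) *\<^sub>R vk w)"
proof -
  have "hs s x \<in> hH (Atilde C t) \<longleftrightarrow> (\<exists>v\<in>prim_pts x. v v* Umat s \<in> Atilde C t)"
    using hs_in_Xspace[OF assms] by (auto simp: hH_def prim_pts_hs)
  also have "\<dots> \<longleftrightarrow> (\<exists>v\<in>prim_pts x. \<exists>w\<in>Cplus C. \<exists>\<delta>\<in>{0..1}.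
      v v* Umat s = scale_k \<delta> w v* diag_t t)"
    unfolding Atilde_def Ctilde_def by fastforce
  finally show ?thesis
    by (simp add: vec_eq_iff_vk_pr[of "_ v* Umat s"] vk_Umat pr_Umat vk_diag_t pr_diag_t
        vk_scale_k pr_scale_k conj_commute)
qed

lemma hit_times_Cplus_iff:
  "\<xi> \<in> hit_times (pr ` Cplus C) x 1 \<longleftrightarrow>
    (\<exists>v\<in>prim_pts x. \<exists>w\<in>Cplus C. pr v = pr w \<and> \<xi> = (1 / vn v) *\<^sub>R vk v)"
  by (auto simp: hit_times_def)

lemma hs_hit_time_in_hH_Atilde:
  assumes "x \<in> Xspace" "\<xi> \<in> hit_times (pr ` Cplus C) x 1"
  shows "hs \<xi> x \<in> hH (Atilde C t)"
proof -
  obtain v w where "v \<in> prim_pts x" "w \<in> Cplus C" "pr v = pr w" "\<xi> = (1 / vn v) *\<^sub>R vk v"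
    using assms(2) hit_times_Cplus_iff by blast
  moreover have "vn v \<noteq> 0"
    using vn_pos_if_pr_eq_Cplus calculation by fastforce
  ultimately show ?thesis
    unfolding hs_in_hH_Atilde_iff[OF assms(1)] by force
qed

lemma prim_pts_vn_pos_bounded_below:
  assumes "x \<in> Xspace" "bounded S"
  obtains \<mu> where "\<mu> > 0" "\<And>v. v \<in> prim_pts x \<inter> S \<Longrightarrow> 0 < vn v \<Longrightarrow> \<mu> \<le> vn v"
proof
  let ?F = "insert 1 (vn ` {v \<in> prim_pts x \<inter> S. 0 < vn v})"
  have "finite ?F"
    by (intro finite.insertI finite_imageI finite_subset[OF _ finite_prim_pts_bounded[OF assms]]) auto
  then show "Min ?F > 0" "\<And>v. v \<in> prim_pts x \<inter> S \<Longrightarrow> 0 < vn v \<Longrightarrow> Min ?F \<le> vn v"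
    by auto
qed

lemma exp_card_mult_le: "0 \<le> t \<Longrightarrow> exp (- real CARD('a::finite) * t) \<le> exp (- t)"
  using mult_right_mono[of 1 "real CARD('a)" t] by (simp add: Suc_le_eq)

lemma norm_le_if_shear_hits:
  assumes "pr v = pr w" "vk v - vn v *\<^sub>R s = a *\<^sub>R vk w" "0 \<le> a" "a \<le> 1"
  shows "norm v \<le> norm w * (norm s + 2)"
proof -
  have "\<bar>vn v\<bar> \<le> norm w"
    using vn_le_norm[of w] norm_pr_le[of w] assms(1) by (simp add: vn_eq_pr)
  then have "\<bar>vn v\<bar> * norm s \<le> norm w * norm s"
    by (rule mult_right_mono) simp
  moreover have "a * norm (vk w) \<le> norm w"
    using mult_left_le_one_le[OF norm_ge_zero assms(3,4)] norm_vk_le order_trans by blast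
  moreover have "norm (vk v) \<le> \<bar>vn v\<bar> * norm s + a * norm (vk w)"
    using norm_triangle_ineq[of "vn v *\<^sub>R s" "a *\<^sub>R vk w"] assms(2,3) by (simp add: algebra_simps)
  ultimately have "norm (vk v) \<le> norm w * norm s + norm w"
    by linarith
  then show ?thesis
    using norm_le_vk_pr[of v] norm_pr_le[of w] assms(1) by (simp add: algebra_simps)
qed

lemma hs_in_hH_Atilde_near_hit_time:
  fixes C :: "(real^('k::finite + 'p::{finite,linorder})) set"
    and N :: "real^'k \<Rightarrow> real"
  assumes N: "is_norm N" and "bounded C" and x: "x \<in> Xspace"
  obtains E where "E \<ge> 0"
    "\<And>t s. 0 \<le> t \<Longrightarrow> N s \<le> R \<Longrightarrow> hs s x \<in> hH (Atilde C t) \<Longrightarrow>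
      \<exists>\<xi>\<in>hit_times (pr ` Cplus C) x 1. N (\<xi> - s) \<le> exp (- t) * E"
proof -
  obtain c where c: "c > 0" "\<And>y. c * norm y \<le> N y"
    using is_norm_ge_norm[OF N] by blast
  obtain K where K: "K \<ge> 0" "\<And>y. N y \<le> K * norm y"
    using is_norm_le_norm[OF N] by blast
  obtain B where B: "B > 0" "\<And>w. w \<in> C \<Longrightarrow> norm w \<le> B"
    using \<open>bounded C\<close> unfolding bounded_pos by blast
  obtain \<mu> where \<mu>: "\<mu> > 0"
    "\<And>v. v \<in> prim_pts x \<inter> cball 0 (B * (R / c + 2)) \<Longrightarrow> 0 < vn v \<Longrightarrow> \<mu> \<le> vn v"
    using prim_pts_vn_pos_bounded_below[OF x bounded_cball] by blast
  show ?thesis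
  proof
    show "K * B / \<mu> \<ge> 0"
      using K(1) B(1) \<mu>(1) by simp
    fix t s assume t: "0 \<le> t" and sR: "N s \<le> R" and hs: "hs s x \<in> hH (Atilde C t)"
    define e where "e = exp (- real CARD('k + 'p) * t)"
    obtain v w \<delta> where v: "v \<in> prim_pts x" and w: "w \<in> Cplus C" and \<delta>: "0 \<le> \<delta>" "\<delta> \<le> 1"
      and prvw: "pr v = pr w" and vkv: "vk v - vn v *\<^sub>R s = (e * \<delta>) *\<^sub>R vk w"
      using hs unfolding hs_in_hH_Atilde_iff[OF x] e_def by auto
    have "e * \<delta> \<le> e" "e \<le> exp (- t)" "exp (- t) \<le> 1"
      using mult_left_le[OF \<delta>(2)] exp_card_mult_le[OF t, where 'a="'k + 'p"] t
      by (simp_all add: e_def)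
    then have e\<delta>: "0 \<le> e * \<delta>" "e * \<delta> \<le> exp (- t)" "e * \<delta> \<le> 1"
      using \<delta> by (simp add: e_def, linarith, linarith)
    have wB: "norm w \<le> B"
      using B(2) w by (simp add: Cplus_def)
    have vn: "0 < vn v"
      using vn_pos_if_pr_eq_Cplus[OF w prvw] .
    have "norm s \<le> R / c"
      using c(1) order_trans[OF c(2) sR] by (simp add: pos_le_divide_eq mult.commute)
    then have "norm w * (norm s + 2) \<le> B * (R / c + 2)"
      using wB B(1) by (intro mult_mono) simp_all
    then have "norm v \<le> B * (R / c + 2)"
      using norm_le_if_shear_hits[OF prvw vkv e\<delta>(1,3)] by linarith
    then have \<mu>v: "\<mu> \<le> vn v"
      using \<mu>(2) v vn by simp
    define \<xi> where "\<xi> = (1 / vn v) *\<^sub>R vk v"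
    have \<xi>: "\<xi> \<in> hit_times (pr ` Cplus C) x 1"
      unfolding hit_times_Cplus_iff \<xi>_def using v w prvw by blast
    have "\<xi> - s = (e * \<delta> / vn v) *\<^sub>R vk w"
      using vkv vn unfolding \<xi>_def by (simp add: field_simps vec_eq_iff)
    then have "N (\<xi> - s) = e * \<delta> / vn v * N (vk w)"
      using e\<delta>(1) vn by (simp add: is_norm_scaleR[OF N])
    also have "\<dots> \<le> exp (- t) / \<mu> * (K * B)"
    proof (rule mult_mono)
      show "e * \<delta> / vn v \<le> exp (- t) / \<mu>"
        using e\<delta> \<mu>(1) \<mu>v by (intro frac_le) simp_all
      show "N (vk w) \<le> K * B"
        using K norm_vk_le[of w] wB by (meson mult_left_mono order_trans)
    qed (simp_all add: \<mu>(1) less_imp_le is_norm_nonneg[OF N])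
    finally show "\<exists>\<xi>\<in>hit_times (pr ` Cplus C) x 1. N (\<xi> - s) \<le> exp (- t) * (K * B / \<mu>)"
      using \<xi> by auto
  qed
qed

lemma xi1_abs_le_hit_time:
  assumes "is_norm N" "\<xi> \<in> hit_times W x L"
  shows "xi1_abs N W x L \<le> N \<xi>"
  unfolding xi1_abs_def using assms is_norm_nonneg[OF assms(1)]
  by (intro cInf_lower) (auto intro: bdd_belowI[of _ 0])

lemma r1_le_norm:
  assumes "is_norm N" "hs s x \<in> E"
  shows "r1 N x E \<le> N s"
  unfolding r1_def using assms is_norm_nonneg[OF assms(1)]
  by (intro cInf_lower) (auto intro: bdd_belowI[of _ 0])

lemma r1_Atilde_le_xi1_abs:
  assumes "is_norm N" "x \<in> Xspace" "hit_times (pr ` Cplus C) x 1 \<noteq> {}"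
  shows "r1 N x (hH (Atilde C t)) \<le> xi1_abs N (pr ` Cplus C) x 1"
  unfolding xi1_abs_def using assms
  by (intro cInf_greatest) (auto intro: r1_le_norm hs_hit_time_in_hH_Atilde)

lemma xi1_abs_le_r1_Atilde:
  fixes C :: "(real^('k::finite + 'p::{finite,linorder})) set"
    and N :: "real^'k \<Rightarrow> real"
  assumes N: "is_norm N" and "bounded C" and x: "x \<in> Xspace"
    and "hit_times (pr ` Cplus C) x 1 \<noteq> {}"
  obtains E where "\<And>t. 0 \<le> t \<Longrightarrow>
    xi1_abs N (pr ` Cplus C) x 1 \<le> r1 N x (hH (Atilde C t)) + exp (- t) * E"
proof -
  let ?M = "xi1_abs N (pr ` Cplus C) x 1"
  obtain E where E: "E \<ge> 0"
    "\<And>t s. 0 \<le> t \<Longrightarrow> N s \<le> ?M + 1 \<Longrightarrow> hs s x \<in> hH (Atilde C t) \<Longrightarrow>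
      \<exists>\<xi>\<in>hit_times (pr ` Cplus C) x 1. N (\<xi> - s) \<le> exp (- t) * E"
    using hs_in_hH_Atilde_near_hit_time[OF N \<open>bounded C\<close> x] by blast
  have "?M - exp (- t) * E \<le> N s" if t: "0 \<le> t" and s: "hs s x \<in> hH (Atilde C t)" for t s
  proof (cases "N s \<le> ?M + 1")
    case True
    then obtain \<xi> where \<xi>: "\<xi> \<in> hit_times (pr ` Cplus C) x 1" "N (\<xi> - s) \<le> exp (- t) * E"
      using E(2)[OF t _ s] by blast
    then show ?thesis
      using xi1_abs_le_hit_time[OF N \<xi>(1)] is_norm_diff_le[OF N, of \<xi> s] by linarith
  next
    case False
    moreover have "0 \<le> exp (- t) * E"
      using E(1) by simp
    ultimately show ?thesis
      by linarith
  qed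
  moreover obtain \<xi> where "\<xi> \<in> hit_times (pr ` Cplus C) x 1"
    using assms(4) by blast
  then have "hs \<xi> x \<in> hH (Atilde C t)" for t
    by (rule hs_hit_time_in_hH_Atilde[OF x])
  ultimately have "?M - exp (- t) * E \<le> r1 N x (hH (Atilde C t))" if "0 \<le> t" for t
    unfolding r1_def using that by (intro cInf_greatest) auto
  then show ?thesis
    by (intro that[of E]) (simp add: algebra_simps)
qed

theorem lemma2:
  fixes C :: "(real^('k::finite + 'p::{finite,linorder})) set"
    and N :: "real^'k \<Rightarrow> real"
    and x :: "(real^('k + 'p)^('k + 'p)) set"
  assumes "is_norm N"
    and "compact C" and "interior C \<noteq> {}" and "frontier C \<in> null_sets lebesgue"
    and "uminus ` C = C"
    and "x \<in> Xspace"
    and "hit_times (pr ` Cplus C) x 1 \<noteq> {}"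
  shows "((\<lambda>t. r1 N x (hH (Atilde C t))) \<longlongrightarrow> xi1_abs N (pr ` Cplus C) x 1) at_top"
proof -
  let ?M = "xi1_abs N (pr ` Cplus C) x 1"
  obtain E where E: "\<And>t. 0 \<le> t \<Longrightarrow> ?M \<le> r1 N x (hH (Atilde C t)) + exp (- t) * E"
    using xi1_abs_le_r1_Atilde[OF assms(1) compact_imp_bounded[OF assms(2)] assms(6,7)] by blast
  have "((\<lambda>t. ?M - exp (- t) * E) \<longlongrightarrow> ?M - 0 * E) at_top"
    by (intro tendsto_intros filterlim_compose[OF exp_at_bot filterlim_uminus_at_bot_at_top])
  then have lower: "((\<lambda>t. ?M - exp (- t) * E) \<longlongrightarrow> ?M) at_top"
    by simp
  show ?thesis
  proof (rule tendsto_sandwich[OF _ _ lower tendsto_const])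
    show "\<forall>\<^sub>F t in at_top. ?M - exp (- t) * E \<le> r1 N x (hH (Atilde C t))"
      using eventually_ge_at_top[of 0] by eventually_elim (use E in force)
    show "\<forall>\<^sub>F t in at_top. r1 N x (hH (Atilde C t)) \<le> ?M"
      using r1_Atilde_le_xi1_abs[OF assms(1,6,7)] by simp
  qed
qed

end
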